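(* Let $(X,\tau)$ be a topological space, $\delta$ a quasi-proximity on $X$ compatible with $\tau$ such that $\mathcal{V}_\delta$ is transitive, and $\mathcal{B}=\mathcal{B}(\mathcal{V}_\delta)$. Let $\{U_i:i\in I\}$ be a nonempty family of transitive relations on $X$ containing the diagonal, closed under finite intersections, and let $\mathcal{V}$ be the filter on $X\times X$ generated by $\mathcal{V}_\delta\cup\{U_i:i\in I\}$. Then $\mathcal{V}\in\pi(\delta)$ if and only if $U_i(A)\in\mathcal{B}$ for every $i\in I$ and every $A\subseteq X$.
   Context: Quasi-uniformities and quasi-proximities are in the sense of Fletcher–Lindgren; $\delta$ compatible with $\tau$ means $\tau(\delta)=\tau$. For a quasi-proximity $\delta$, $\pi(\delta)$ is the set of quasi-uniformities $\mathcal{V}$ with $\delta(\mathcal{V})=\delta$, and $\mathcal{V}_\delta$ is its coarsest element (totally bounded). A quasi-uniformity is transitive if it has a base of transitive entourages. For $U\subseteq X\times X$, $U(x)=\{y:(x,y)\in U\}$ and $U(A)=\bigcup_{a\in A}U(a)$. For $N\subseteq X$, $U_N=(N\times N)\cup((X\setminus N)\times X)$, and $\mathcal{B}(\mathcal{W})=\{N\in\tau:U_N\in\mathcal{W}\}$; for $\mathcal{W}=\mathcal{V}_\delta$ transitive this is an l-base (a base of $\tau$ closed under finite unions and intersections containing $\emptyset,X$). *)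

theory Defs
  imports "HOL-Analysis.Analysis"
begin

text \<open>The ground set X is the whole type 'a. A binary relation delta on subsets of X
  is written as a curried predicate.\<close>

definition quasi_proximity :: "('a set \<Rightarrow> 'a set \<Rightarrow> bool) \<Rightarrow> bool" where
  "quasi_proximity \<delta> \<longleftrightarrow>
     \<not> \<delta> UNIV {} \<and> \<not> \<delta> {} UNIV \<and>
     (\<forall>A B C. \<delta> C (A \<union> B) \<longleftrightarrow> \<delta> C A \<or> \<delta> C B) \<and>
     (\<forall>A B C. \<delta> (A \<union> B) C \<longleftrightarrow> \<delta> A C \<or> \<delta> B C) \<and>
     (\<forall>x. \<delta> {x} {x}) \<and>
     (\<forall>A B. \<not> \<delta> A B \<longrightarrow> (\<exists>C. \<not> \<delta> A C \<and> \<not> \<delta> (- C) B))"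

definition qp_open :: "('a set \<Rightarrow> 'a set \<Rightarrow> bool) \<Rightarrow> 'a set \<Rightarrow> bool" where
  "qp_open \<delta> G \<longleftrightarrow> (\<forall>x\<in>G. \<not> \<delta> {x} (- G))"

definition qp_compatible :: "('a set \<Rightarrow> 'a set \<Rightarrow> bool) \<Rightarrow> 'a topology \<Rightarrow> bool" where
  "qp_compatible \<delta> \<tau> \<longleftrightarrow> (\<forall>G. openin \<tau> G \<longleftrightarrow> qp_open \<delta> G)"

definition gen_filter :: "('a \<times> 'a) set set \<Rightarrow> ('a \<times> 'a) set set" where
  "gen_filter S = {W. \<exists>F. finite F \<and> F \<subseteq> S \<and> \<Inter>F \<subseteq> W}"

definition is_filter :: "('a \<times> 'a) set set \<Rightarrow> bool" where
  "is_filter \<V> \<longleftrightarrow> \<V> \<noteq> {} \<and>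
     (\<forall>U\<in>\<V>. \<forall>W. U \<subseteq> W \<longrightarrow> W \<in> \<V>) \<and>
     (\<forall>U\<in>\<V>. \<forall>W\<in>\<V>. U \<inter> W \<in> \<V>)"

definition quasi_uniformity :: "('a \<times> 'a) set set \<Rightarrow> bool" where
  "quasi_uniformity \<V> \<longleftrightarrow> is_filter \<V> \<and>
     (\<forall>U\<in>\<V>. Id \<subseteq> U) \<and>
     (\<forall>U\<in>\<V>. \<exists>W\<in>\<V>. W O W \<subseteq> U)"

definition qprox_of :: "('a \<times> 'a) set set \<Rightarrow> 'a set \<Rightarrow> 'a set \<Rightarrow> bool" where
  "qprox_of \<V> A B \<longleftrightarrow> (\<forall>U\<in>\<V>. U `` A \<inter> B \<noteq> {})"

definition pi_class :: "('a set \<Rightarrow> 'a set \<Rightarrow> bool) \<Rightarrow> ('a \<times> 'a) set set set" where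
  "pi_class \<delta> = {\<V>. quasi_uniformity \<V> \<and> qprox_of \<V> = \<delta>}"

definition V_delta :: "('a set \<Rightarrow> 'a set \<Rightarrow> bool) \<Rightarrow> ('a \<times> 'a) set set" where
  "V_delta \<delta> = (THE \<W>. \<W> \<in> pi_class \<delta> \<and> (\<forall>\<V>\<in>pi_class \<delta>. \<W> \<subseteq> \<V>))"

definition transitive_qu :: "('a \<times> 'a) set set \<Rightarrow> bool" where
  "transitive_qu \<V> \<longleftrightarrow> (\<forall>U\<in>\<V>. \<exists>W\<in>\<V>. trans W \<and> W \<subseteq> U)"

definition U_N :: "'a set \<Rightarrow> ('a \<times> 'a) set" where
  "U_N N = (N \<times> N) \<union> ((- N) \<times> UNIV)"

definition B_of :: "'a topology \<Rightarrow> ('a \<times> 'a) set set \<Rightarrow> 'a set set" where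
  "B_of \<tau> \<W> = {N. openin \<tau> N \<and> U_N N \<in> \<W>}"

end

theory Submission
  imports Defs
begin

text \<open>The coarsest quasi-uniformity of \<open>\<delta>\<close> is generated by the entourages
  \<open>(X - C) \<times> X \<union> X \<times> (X - D)\<close> with \<open>C\<close> far from \<open>D\<close>. Adding transitive relations \<open>U\<^sub>i\<close>
  keeps the proximity \<open>\<delta>\<close> exactly when every \<open>U\<^sub>i(A)\<close> is far from its complement, and by
  compatibility the sets \<open>N\<close> far from \<open>X - N\<close> are precisely the members of \<open>\<B>\<close>. The
  nontrivial half is that \<open>(W \<inter> U\<^sub>i)(A) \<inter> B = \<emptyset>\<close> for a basic entourage \<open>W \<inter> U\<^sub>i\<close> forces \<open>A\<close>
  far from \<open>B\<close>: with no far entourages left this is the neighbourhood property of \<open>U\<^sub>i\<close>,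
  and each far entourage of \<open>W\<close> is peeled off by splitting \<open>A\<close> along \<open>C\<close> and \<open>B\<close> along \<open>D\<close>.\<close>

lemma qp_Un_left: "quasi_proximity \<delta> \<Longrightarrow> \<delta> (A \<union> B) C \<longleftrightarrow> \<delta> A C \<or> \<delta> B C"
  unfolding quasi_proximity_def by blast

lemma qp_Un_right: "quasi_proximity \<delta> \<Longrightarrow> \<delta> C (A \<union> B) \<longleftrightarrow> \<delta> C A \<or> \<delta> C B"
  unfolding quasi_proximity_def by blast

lemma qp_mono:
  assumes "quasi_proximity \<delta>" "\<delta> A B" "A \<subseteq> A'" "B \<subseteq> B'"
  shows "\<delta> A' B'"
proof -
  have "\<delta> (A \<union> A') (B \<union> B')"
    using assms(1,2) qp_Un_left qp_Un_right by blast
  with assms(3,4) show ?thesis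
    by (simp add: sup_absorb2)
qed

lemma qp_empty_left:
  assumes "quasi_proximity \<delta>"
  shows "\<not> \<delta> {} B"
proof
  assume "\<delta> {} B"
  then have "\<delta> {} UNIV"
    using qp_mono[OF assms _ order_refl subset_UNIV] by blast
  with assms show False
    unfolding quasi_proximity_def by simp
qed

lemma qp_empty_right:
  assumes "quasi_proximity \<delta>"
  shows "\<not> \<delta> A {}"
proof
  assume "\<delta> A {}"
  then have "\<delta> UNIV {}"
    using qp_mono[OF assms _ subset_UNIV order_refl] by blast
  with assms show False
    unfolding quasi_proximity_def by simp
qed

lemma qp_common_point:
  assumes "quasi_proximity \<delta>" "x \<in> A" "x \<in> B"
  shows "\<delta> A B"
proof -
  have "\<delta> {x} {x}"
    using assms(1) unfolding quasi_proximity_def by simp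
  with assms show ?thesis
    using qp_mono[of \<delta> "{x}" "{x}" A B] by blast
qed

lemma is_filter_gen_filter: "is_filter (gen_filter S)"
  unfolding is_filter_def
proof (intro conjI ballI allI impI)
  have "UNIV \<in> gen_filter S"
    unfolding gen_filter_def by (intro CollectI exI[of _ "{}"]) simp
  then show "gen_filter S \<noteq> {}"
    by blast
next
  fix U W assume "U \<in> gen_filter S" "U \<subseteq> W"
  then obtain F where "finite F" "F \<subseteq> S" "\<Inter>F \<subseteq> U"
    unfolding gen_filter_def by blast
  with \<open>U \<subseteq> W\<close> show "W \<in> gen_filter S"
    unfolding gen_filter_def by (intro CollectI exI[of _ F]) auto
next
  fix U W assume "U \<in> gen_filter S" "W \<in> gen_filter S"
  then obtain F G where "finite F" "F \<subseteq> S" "\<Inter>F \<subseteq> U" "finite G" "G \<subseteq> S" "\<Inter>G \<subseteq> W"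
    unfolding gen_filter_def by blast
  then show "U \<inter> W \<in> gen_filter S"
    unfolding gen_filter_def by (intro CollectI exI[of _ "F \<union> G"]) auto
qed

lemma gen_filter_generator: "S \<subseteq> gen_filter S"
proof
  fix s assume "s \<in> S"
  then show "s \<in> gen_filter S"
    unfolding gen_filter_def by (intro CollectI exI[of _ "{s}"]) simp
qed

lemma is_filter_Inter:
  assumes "is_filter \<V>" "finite F" "F \<subseteq> \<V>"
  shows "\<Inter>F \<in> \<V>"
  using assms(2,3)
proof (induction F rule: finite_induct)
  case empty
  with \<open>is_filter \<V>\<close> show ?case
    unfolding is_filter_def by (metis Inter_empty ex_in_conv subset_UNIV)
next
  case (insert U F)
  with \<open>is_filter \<V>\<close> show ?case
    unfolding is_filter_def by simp
qed

lemma gen_filter_least: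
  assumes "is_filter \<V>" "S \<subseteq> \<V>"
  shows "gen_filter S \<subseteq> \<V>"
proof
  fix W assume "W \<in> gen_filter S"
  then obtain F where "finite F" "F \<subseteq> S" "\<Inter>F \<subseteq> W"
    unfolding gen_filter_def by blast
  moreover have "\<Inter>F \<in> \<V>"
    using is_filter_Inter[OF assms(1) \<open>finite F\<close>] \<open>F \<subseteq> S\<close> assms(2) by blast
  ultimately show "W \<in> \<V>"
    using assms(1) unfolding is_filter_def by blast
qed

lemma gen_filter_UnE:
  assumes "W \<in> gen_filter (S \<union> T)"
  obtains F G where "finite F" "F \<subseteq> S" "finite G" "G \<subseteq> T" "\<Inter>F \<inter> \<Inter>G \<subseteq> W"
proof -
  obtain H where H: "finite H" "H \<subseteq> S \<union> T" "\<Inter>H \<subseteq> W"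
    using assms unfolding gen_filter_def by blast
  have "\<Inter>(H \<inter> S) \<inter> \<Inter>(H - S) = \<Inter>H"
    using Inter_Un_distrib[of "H \<inter> S" "H - S"] by (simp add: Int_Diff_Un)
  with H show thesis
    by (intro that[of "H \<inter> S" "H - S"]) auto
qed

lemma quasi_uniformity_gen_filter:
  assumes refl: "\<forall>s\<in>S. Id \<subseteq> s"
    and roots: "\<forall>s\<in>S. \<exists>w\<in>gen_filter S. w O w \<subseteq> s"
  shows "quasi_uniformity (gen_filter S)"
  unfolding quasi_uniformity_def
proof (intro conjI ballI is_filter_gen_filter)
  fix U assume "U \<in> gen_filter S"
  then obtain F where F: "finite F" "F \<subseteq> S" "\<Inter>F \<subseteq> U"
    unfolding gen_filter_def by blast
  have "Id \<subseteq> \<Inter>F"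
    using refl F(2) by blast
  then show "Id \<subseteq> U"
    using F(3) by (rule order_trans)
  have "\<forall>s\<in>F. \<exists>w. w \<in> gen_filter S \<and> w O w \<subseteq> s"
    using roots F(2) by blast
  from finite_set_choice[OF F(1) this] obtain root
    where root: "\<forall>s\<in>F. root s \<in> gen_filter S \<and> root s O root s \<subseteq> s"
    by blast
  define w where "w = \<Inter>(root ` F)"
  have "w \<in> gen_filter S"
    unfolding w_def using is_filter_Inter[OF is_filter_gen_filter finite_imageI[OF F(1)]] root
    by blast
  moreover have "w O w \<subseteq> \<Inter>F"
  proof (rule Inter_greatest)
    fix s assume "s \<in> F"
    then have "w \<subseteq> root s"
      unfolding w_def by blast
    then have "w O w \<subseteq> root s O root s"
      by (intro relcomp_mono)
    with root \<open>s \<in> F\<close> show "w O w \<subseteq> s"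
      by blast
  qed
  then have "w O w \<subseteq> U"
    using F(3) by (rule order_trans)
  ultimately show "\<exists>w\<in>gen_filter S. w O w \<subseteq> U"
    by blast
qed

definition far_entourage :: "'a set \<Rightarrow> 'a set \<Rightarrow> ('a \<times> 'a) set" where
  "far_entourage C D = ((- C) \<times> UNIV) \<union> (UNIV \<times> (- D))"

definition far_entourages :: "('a set \<Rightarrow> 'a set \<Rightarrow> bool) \<Rightarrow> ('a \<times> 'a) set set" where
  "far_entourages \<delta> = {far_entourage C D | C D. \<not> \<delta> C D}"

definition strong_nbhd_rel :: "('a set \<Rightarrow> 'a set \<Rightarrow> bool) \<Rightarrow> ('a \<times> 'a) set \<Rightarrow> bool" where
  "strong_nbhd_rel \<delta> R \<longleftrightarrow> (\<forall>A. \<not> \<delta> A (- (R `` A)))"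

lemma U_N_eq_far_entourage: "U_N N = far_entourage N (- N)"
  unfolding U_N_def far_entourage_def by blast

lemma far_entourage_Image_disjoint: "far_entourage C D `` C \<inter> D = {}"
  unfolding far_entourage_def by auto

lemma subset_far_entourage: "U `` C \<inter> D = {} \<Longrightarrow> U \<subseteq> far_entourage C D"
  unfolding far_entourage_def by (auto simp: subset_iff)

lemma far_entourage_relcomp: "far_entourage C M O far_entourage (- M) D \<subseteq> far_entourage C D"
  unfolding far_entourage_def by (auto simp: subset_iff)

lemma Image_Diff_subset_far_entourage: "W `` (A - C) \<subseteq> (far_entourage C D \<inter> W) `` A"
  unfolding far_entourage_def by blast

lemma Image_Int_subset_far_entourage: "W `` (A \<inter> C) - D \<subseteq> (far_entourage C D \<inter> W) `` A"
  unfolding far_entourage_def by blast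

lemma far_entouragesE:
  assumes "s \<in> far_entourages \<delta>"
  obtains C D where "s = far_entourage C D" "\<not> \<delta> C D"
  using assms unfolding far_entourages_def by blast

lemma Id_subset_far_entourage:
  assumes "quasi_proximity \<delta>" "\<not> \<delta> C D"
  shows "Id \<subseteq> far_entourage C D"
  unfolding far_entourage_def using qp_common_point[OF assms(1)] assms(2) by blast

lemma far_entourage_in_gen_filter:
  "\<not> \<delta> C D \<Longrightarrow> far_entourage C D \<in> gen_filter (far_entourages \<delta>)"
  unfolding far_entourages_def by (rule subsetD[OF gen_filter_generator]) blast

lemma strong_nbhd_rel_UNIV:
  assumes "quasi_proximity \<delta>"
  shows "strong_nbhd_rel \<delta> UNIV"
  unfolding strong_nbhd_rel_def
proof
  fix A :: "'a set"
  show "\<not> \<delta> A (- (UNIV `` A))"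
  proof (cases "A = {}")
    case True
    with assms show ?thesis
      by (simp add: qp_empty_left)
  next
    case False
    then have "- (UNIV `` A) = {}"
      by auto
    then show ?thesis
      using qp_empty_right[OF assms] by metis
  qed
qed

lemma strong_nbhd_relI:
  assumes "quasi_proximity \<delta>" "Id \<subseteq> R" "\<forall>A. \<not> \<delta> (R `` A) (- (R `` A))"
  shows "strong_nbhd_rel \<delta> R"
  unfolding strong_nbhd_rel_def
proof
  fix A
  have "A \<subseteq> R `` A"
    using assms(2) by auto
  with assms(3) show "\<not> \<delta> A (- (R `` A))"
    using qp_mono[OF assms(1) _ _ order_refl] by blast
qed

lemma far_if_Image_disjoint_Inter:
  assumes qp: "quasi_proximity \<delta>" and R: "strong_nbhd_rel \<delta> R"
    and "finite F" "F \<subseteq> far_entourages \<delta>"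
  shows "(\<Inter>F \<inter> R) `` A \<inter> B = {} \<Longrightarrow> \<not> \<delta> A B"
  using assms(3,4)
proof (induction F arbitrary: A B rule: finite_induct)
  case empty
  then have "B \<subseteq> - (R `` A)"
    by auto
  with R show ?case
    unfolding strong_nbhd_rel_def using qp_mono[OF qp _ order_refl] by blast
next
  case (insert E F)
  then obtain C D where E: "E = far_entourage C D" and CD: "\<not> \<delta> C D"
    unfolding far_entourages_def by blast
  have F: "F \<subseteq> far_entourages \<delta>"
    using insert.prems(2) by simp
  have disjoint: "(E \<inter> (\<Inter>F \<inter> R)) `` A \<inter> B = {}"
    using insert.prems(1) by (simp add: Int_assoc)
  text \<open>Outside \<open>C\<close> the entourage \<open>E\<close> imposes nothing; inside \<open>C\<close> it only excludes \<open>D\<close>.\<close>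
  have "(\<Inter>F \<inter> R) `` (A - C) \<inter> B = {}"
    using Image_Diff_subset_far_entourage[of "\<Inter>F \<inter> R" A C D] disjoint unfolding E by blast
  then have far_outside: "\<not> \<delta> (A - C) B"
    using F by (rule insert.IH)
  have "(\<Inter>F \<inter> R) `` (A \<inter> C) \<inter> (B - D) = {}"
    using Image_Int_subset_far_entourage[of "\<Inter>F \<inter> R" A C D] disjoint unfolding E by blast
  then have "\<not> \<delta> (A \<inter> C) (B - D)"
    using F by (rule insert.IH)
  moreover have "\<not> \<delta> (A \<inter> C) D"
    using CD qp_mono[OF qp _ Int_lower2 order_refl] by blast
  ultimately have "\<not> \<delta> (A \<inter> C) ((B - D) \<union> D)"
    using qp_Un_right[OF qp] by blast
  then have "\<not> \<delta> (A \<inter> C) B"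
    using qp_mono[OF qp _ order_refl, of "A \<inter> C" B "(B - D) \<union> D"] by blast
  with far_outside have "\<not> \<delta> ((A - C) \<union> (A \<inter> C)) B"
    using qp_Un_left[OF qp] by blast
  then show ?case
    by (simp add: Un_Diff_Int)
qed

lemma far_if_Image_disjoint:
  assumes "quasi_proximity \<delta>" "strong_nbhd_rel \<delta> R"
    and "W \<in> gen_filter (far_entourages \<delta>)" "(W \<inter> R) `` A \<inter> B = {}"
  shows "\<not> \<delta> A B"
proof -
  obtain F where F: "finite F" "F \<subseteq> far_entourages \<delta>" "\<Inter>F \<subseteq> W"
    using assms(3) unfolding gen_filter_def by blast
  then have "(\<Inter>F \<inter> R) `` A \<inter> B = {}"
    using assms(4) by blast
  with assms(1,2) F(1,2) show ?thesis
    by (rule far_if_Image_disjoint_Inter)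
qed

lemma gen_far_entourages_in_pi_class:
  assumes qp: "quasi_proximity \<delta>"
  shows "gen_filter (far_entourages \<delta>) \<in> pi_class \<delta>"
proof -
  have "Id \<subseteq> s" if "s \<in> far_entourages \<delta>" for s
    using that by (rule far_entouragesE) (simp add: Id_subset_far_entourage[OF qp])
  moreover have "\<exists>w\<in>gen_filter (far_entourages \<delta>). w O w \<subseteq> s"
    if s_far: "s \<in> far_entourages \<delta>" for s
  proof -
    obtain C D where s: "s = far_entourage C D" "\<not> \<delta> C D"
      using s_far by (rule far_entouragesE)
    then obtain M where M: "\<not> \<delta> C M" "\<not> \<delta> (- M) D"
      using qp unfolding quasi_proximity_def by blast
    define w where "w = far_entourage C M \<inter> far_entourage (- M) D"
    have "w \<in> gen_filter (far_entourages \<delta>)"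
      using is_filter_gen_filter far_entourage_in_gen_filter[of \<delta>, OF M(1)]
        far_entourage_in_gen_filter[of \<delta>, OF M(2)]
      unfolding w_def is_filter_def by blast
    moreover have "w O w \<subseteq> s"
      unfolding w_def s(1) using relcomp_mono[OF Int_lower1 Int_lower2] far_entourage_relcomp
      by (rule order_trans)
    ultimately show ?thesis
      by blast
  qed
  ultimately have "quasi_uniformity (gen_filter (far_entourages \<delta>))"
    by (simp add: quasi_uniformity_gen_filter)
  moreover have "qprox_of (gen_filter (far_entourages \<delta>)) A B \<longleftrightarrow> \<delta> A B" for A B
  proof
    assume near: "qprox_of (gen_filter (far_entourages \<delta>)) A B"
    show "\<delta> A B"
    proof (rule ccontr)
      assume "\<not> \<delta> A B"
      then have "far_entourage A B \<in> gen_filter (far_entourages \<delta>)"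
        by (rule far_entourage_in_gen_filter)
      with near far_entourage_Image_disjoint[of A B] show False
        unfolding qprox_of_def by blast
    qed
  next
    assume "\<delta> A B"
    then show "qprox_of (gen_filter (far_entourages \<delta>)) A B"
      using far_if_Image_disjoint[OF qp strong_nbhd_rel_UNIV[OF qp]]
      unfolding qprox_of_def by (metis Int_UNIV_right)
  qed
  ultimately show ?thesis
    unfolding pi_class_def by auto
qed

lemma gen_far_entourages_least:
  assumes "\<V> \<in> pi_class \<delta>"
  shows "gen_filter (far_entourages \<delta>) \<subseteq> \<V>"
proof (rule gen_filter_least)
  have "quasi_uniformity \<V>" and \<V>_prox: "qprox_of \<V> = \<delta>"
    using assms unfolding pi_class_def by auto
  then show \<V>: "is_filter \<V>"
    unfolding quasi_uniformity_def by simp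
  show "far_entourages \<delta> \<subseteq> \<V>"
  proof
    fix s assume "s \<in> far_entourages \<delta>"
    then obtain C D where s: "s = far_entourage C D" "\<not> \<delta> C D"
      by (rule far_entouragesE)
    with \<V>_prox obtain U where "U \<in> \<V>" "U `` C \<inter> D = {}"
      unfolding qprox_of_def by blast
    moreover from this(2) have "U \<subseteq> s"
      unfolding s(1) by (rule subset_far_entourage)
    ultimately show "s \<in> \<V>"
      using \<V> unfolding is_filter_def by blast
  qed
qed

lemma V_delta_eq_gen_far_entourages:
  assumes "quasi_proximity \<delta>"
  shows "V_delta \<delta> = gen_filter (far_entourages \<delta>)"
  unfolding V_delta_def
  using gen_far_entourages_in_pi_class[OF assms] gen_far_entourages_least
  by (intro the_equality) blast+

lemma V_delta_in_pi_class: "quasi_proximity \<delta> \<Longrightarrow> V_delta \<delta> \<in> pi_class \<delta>"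
  by (simp add: V_delta_eq_gen_far_entourages gen_far_entourages_in_pi_class)

lemma far_Image_complement:
  assumes "\<V> \<in> pi_class \<delta>" "R \<in> \<V>" "trans R"
  shows "\<not> \<delta> (R `` A) (- (R `` A))"
proof -
  have "R `` (R `` A) \<subseteq> R `` A"
    using assms(3) unfolding trans_def by blast
  then have "R `` (R `` A) \<inter> - (R `` A) = {}"
    by blast
  with assms(1,2) show ?thesis
    unfolding pi_class_def qprox_of_def by blast
qed

lemma B_of_V_delta_iff:
  assumes qp: "quasi_proximity \<delta>" and "qp_compatible \<delta> \<tau>"
  shows "N \<in> B_of \<tau> (V_delta \<delta>) \<longleftrightarrow> \<not> \<delta> N (- N)"
proof
  assume "N \<in> B_of \<tau> (V_delta \<delta>)"
  then have "far_entourage N (- N) \<in> V_delta \<delta>"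
    unfolding B_of_def U_N_eq_far_entourage by simp
  then have "\<not> qprox_of (V_delta \<delta>) N (- N)"
    using far_entourage_Image_disjoint[of N "- N"] unfolding qprox_of_def by blast
  with V_delta_in_pi_class[OF qp] show "\<not> \<delta> N (- N)"
    unfolding pi_class_def by simp
next
  assume far: "\<not> \<delta> N (- N)"
  then have "qp_open \<delta> N"
    unfolding qp_open_def using qp_mono[OF qp _ _ order_refl] by blast
  with assms(2) have "openin \<tau> N"
    unfolding qp_compatible_def by blast
  moreover have "U_N N \<in> V_delta \<delta>"
    using far_entourage_in_gen_filter[of \<delta>, OF far]
    unfolding V_delta_eq_gen_far_entourages[OF qp] U_N_eq_far_entourage .
  ultimately show "N \<in> B_of \<tau> (V_delta \<delta>)"
    unfolding B_of_def by simp
qed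

lemma strong_nbhd_rel_if_Image_in_B_of:
  assumes "quasi_proximity \<delta>" "qp_compatible \<delta> \<tau>"
    and "Id \<subseteq> R" "\<forall>A. R `` A \<in> B_of \<tau> (V_delta \<delta>)"
  shows "strong_nbhd_rel \<delta> R"
proof (rule strong_nbhd_relI[OF assms(1,3)])
  show "\<forall>A. \<not> \<delta> (R `` A) (- (R `` A))"
    using assms(4) B_of_V_delta_iff[OF assms(1,2)] by blast
qed

lemma image_Int_closed:
  assumes "\<forall>i\<in>I. \<forall>j\<in>I. \<exists>k\<in>I. U k = U i \<inter> U j"
  shows "\<forall>R\<in>U ` I. \<forall>S\<in>U ` I. R \<inter> S \<in> U ` I"
proof (intro ballI)
  fix R S assume "R \<in> U ` I" "S \<in> U ` I"
  then obtain i j where "i \<in> I" "j \<in> I" "R = U i" "S = U j"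
    by blast
  with assms obtain k where "k \<in> I" "R \<inter> S = U k"
    by metis
  then show "R \<inter> S \<in> U ` I"
    by blast
qed

lemma Inter_in_insert_UNIV:
  assumes "finite F" "F \<subseteq> \<R>" "\<forall>R\<in>\<R>. \<forall>S\<in>\<R>. R \<inter> S \<in> \<R>"
  shows "\<Inter>F \<in> insert UNIV \<R>"
  using assms(1,2)
proof (induction F rule: finite_induct)
  case (insert R F)
  then have "R \<in> \<R>" "\<Inter>F = UNIV \<or> \<Inter>F \<in> \<R>"
    by auto
  with assms(3) show ?case
    by (metis Inter_insert inf_top_right insertI2)
qed simp

lemma far_if_Image_disjoint_Un:
  assumes qp: "quasi_proximity \<delta>"
    and \<R>: "\<forall>R\<in>\<R>. strong_nbhd_rel \<delta> R" "\<forall>R\<in>\<R>. \<forall>S\<in>\<R>. R \<inter> S \<in> \<R>"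
    and W: "W \<in> gen_filter (V_delta \<delta> \<union> \<R>)" "W `` A \<inter> B = {}"
  shows "\<not> \<delta> A B"
proof -
  obtain F G where F: "finite F" "F \<subseteq> V_delta \<delta>" and G: "finite G" "G \<subseteq> \<R>"
    and FG: "\<Inter>F \<inter> \<Inter>G \<subseteq> W"
    using W(1) by (rule gen_filter_UnE)
  have "\<Inter>F \<in> gen_filter (far_entourages \<delta>)"
    using is_filter_Inter[OF is_filter_gen_filter F(1)] F(2)
    unfolding V_delta_eq_gen_far_entourages[OF qp] .
  moreover have "strong_nbhd_rel \<delta> (\<Inter>G)"
    using Inter_in_insert_UNIV[OF G \<R>(2)] \<R>(1) strong_nbhd_rel_UNIV[OF qp] by (metis insertE)
  moreover have "(\<Inter>F \<inter> \<Inter>G) `` A \<inter> B = {}"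
    using Image_mono[OF FG order_refl, of A] W(2) by blast
  ultimately show ?thesis
    using far_if_Image_disjoint[OF qp] by blast
qed

lemma gen_filter_V_delta_Un_in_pi_class:
  assumes qp: "quasi_proximity \<delta>"
    and \<R>: "\<forall>R\<in>\<R>. trans R \<and> Id \<subseteq> R \<and> strong_nbhd_rel \<delta> R"
      "\<forall>R\<in>\<R>. \<forall>S\<in>\<R>. R \<inter> S \<in> \<R>"
  shows "gen_filter (V_delta \<delta> \<union> \<R>) \<in> pi_class \<delta>"
proof -
  define \<V> where "\<V> = gen_filter (V_delta \<delta> \<union> \<R>)"
  have \<delta>: "quasi_uniformity (V_delta \<delta>)" "qprox_of (V_delta \<delta>) = \<delta>"
    using V_delta_in_pi_class[OF qp] unfolding pi_class_def by auto
  have sub: "V_delta \<delta> \<subseteq> \<V>" "\<R> \<subseteq> \<V>"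
    unfolding \<V>_def using gen_filter_generator by blast+
  have roots: "\<exists>w\<in>\<V>. w O w \<subseteq> s" if "s \<in> V_delta \<delta> \<union> \<R>" for s
    using that
  proof
    assume "s \<in> V_delta \<delta>"
    then obtain w where "w \<in> V_delta \<delta>" "w O w \<subseteq> s"
      using \<delta>(1) unfolding quasi_uniformity_def by blast
    with sub(1) show ?thesis
      by blast
  next
    assume "s \<in> \<R>"
    then have "s O s \<subseteq> s"
      using \<R>(1) trans_O_subset by blast
    with sub(2) \<open>s \<in> \<R>\<close> show ?thesis
      by blast
  qed
  have refl: "Id \<subseteq> s" if "s \<in> V_delta \<delta> \<union> \<R>" for s
    using that \<delta>(1) \<R>(1) unfolding quasi_uniformity_def by blast
  have "quasi_uniformity \<V>"
    using refl roots unfolding \<V>_def by (simp add: quasi_uniformity_gen_filter)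
  moreover have "qprox_of \<V> A B \<longleftrightarrow> \<delta> A B" for A B
  proof
    assume "qprox_of \<V> A B"
    then have "qprox_of (V_delta \<delta>) A B"
      using sub(1) unfolding qprox_of_def by blast
    with \<delta>(2) show "\<delta> A B"
      by simp
  next
    assume "\<delta> A B"
    show "qprox_of \<V> A B"
      unfolding qprox_of_def
    proof (intro ballI notI)
      fix W assume "W \<in> \<V>" "W `` A \<inter> B = {}"
      then have "\<not> \<delta> A B"
        using far_if_Image_disjoint_Un[OF qp _ \<R>(2)] \<R>(1) unfolding \<V>_def by blast
      with \<open>\<delta> A B\<close> show False
        by simp
    qed
  qed
  ultimately show ?thesis
    unfolding pi_class_def \<V>_def by auto
qed

theorem proposition2p4:
  fixes \<tau> :: "'a topology" and \<delta> :: "'a set \<Rightarrow> 'a set \<Rightarrow> bool"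
    and I :: "'i set" and U :: "'i \<Rightarrow> ('a \<times> 'a) set"
  assumes "topspace \<tau> = UNIV"
    and "quasi_proximity \<delta>"
    and "qp_compatible \<delta> \<tau>"
    and "transitive_qu (V_delta \<delta>)"
    and "I \<noteq> {}"
    and "\<forall>i\<in>I. trans (U i) \<and> Id \<subseteq> U i"
    and "\<forall>i\<in>I. \<forall>j\<in>I. \<exists>k\<in>I. U k = U i \<inter> U j"
  shows "gen_filter (V_delta \<delta> \<union> U ` I) \<in> pi_class \<delta> \<longleftrightarrow>
         (\<forall>i\<in>I. \<forall>A. U i `` A \<in> B_of \<tau> (V_delta \<delta>))"
proof
  assume \<V>: "gen_filter (V_delta \<delta> \<union> U ` I) \<in> pi_class \<delta>"
  show "\<forall>i\<in>I. \<forall>A. U i `` A \<in> B_of \<tau> (V_delta \<delta>)"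
  proof (intro ballI allI)
    fix i A assume "i \<in> I"
    then have "U i \<in> gen_filter (V_delta \<delta> \<union> U ` I)"
      by (intro subsetD[OF gen_filter_generator]) simp
    moreover have "trans (U i)"
      using assms(6) \<open>i \<in> I\<close> by blast
    ultimately have "\<not> \<delta> (U i `` A) (- (U i `` A))"
      by (rule far_Image_complement[OF \<V>])
    then show "U i `` A \<in> B_of \<tau> (V_delta \<delta>)"
      using B_of_V_delta_iff[OF assms(2,3)] by blast
  qed
next
  assume "\<forall>i\<in>I. \<forall>A. U i `` A \<in> B_of \<tau> (V_delta \<delta>)"
  then have "\<forall>R\<in>U ` I. trans R \<and> Id \<subseteq> R \<and> strong_nbhd_rel \<delta> R"
    using assms(6) strong_nbhd_rel_if_Image_in_B_of[OF assms(2,3)] by blast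
  moreover have "\<forall>R\<in>U ` I. \<forall>S\<in>U ` I. R \<inter> S \<in> U ` I"
    using assms(7) by (rule image_Int_closed)
  ultimately show "gen_filter (V_delta \<delta> \<union> U ` I) \<in> pi_class \<delta>"
    by (rule gen_filter_V_delta_Un_in_pi_class[OF assms(2)])
qed

end
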